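(* For fixed $0<r<1$, as $n\to\infty$, $$\sum_{j}P_{n,r}(j)\Big(\frac{2j}{n}-r\Big)^2=\frac{1-r^2}{n}-\frac{2(1-r)}{r}\,\frac1{n^2}+O(\gamma^n)$$ for some $\gamma\in(0,1)$ depending only on $r$, where the sum runs over $j\in\{n/2,n/2-1,\dots\}$, $j\ge0$.
   Context: For $n\ge1$ and $0\le r<1$, $P_{n,r}$ is the probability distribution on $j\in\{n/2,n/2-1,\dots\}\cap[0,\infty)$ given by $$P_{n,r}(j)=\Big(\binom{n}{n/2-j}-\binom{n}{n/2-j-1}\Big)\sum_{m=-j}^{j}\Big(\frac{1-r}{2}\Big)^{n/2-m}\Big(\frac{1+r}{2}\Big)^{n/2+m},$$ with $\binom{n}{-1}=0$. (It is the distribution of the total-spin label $j$ obtained by projecting $\rho^{\otimes n}$, for a qubit state $\rho$ with Bloch vector of length $r$, onto the isotypic components of the $SU(2)$ decomposition of $(\mathbb{C}^2)^{\otimes n}$.) *)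

theory Defs
  imports Complex_Main "HOL-Library.Landau_Symbols"
begin

text \<open>The spin label j ranges over n/2, n/2 - 1, ..., down to 0 or 1/2.
  We index it by k = n/2 - j, so k ranges over 0..n div 2 and j = n/2 - k.
  The inner sum over m = -j, ..., j is indexed by i = m + j in 0..n-2k,
  so that n/2 - m = n - k - i and n/2 + m = k + i.\<close>

definition spin_P :: "nat \<Rightarrow> real \<Rightarrow> nat \<Rightarrow> real" where
  "spin_P n r k =
     (real (n choose k) - (if k = 0 then 0 else real (n choose (k - 1)))) *
     (\<Sum>i = 0..n - 2 * k. ((1 - r) / 2) ^ (n - k - i) * ((1 + r) / 2) ^ (k + i))"

definition spin_ratio :: "nat \<Rightarrow> nat \<Rightarrow> real" where
  "spin_ratio n k = (real n - 2 * real k) / real n"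

end

theory Submission
  imports Defs
begin

text \<open>With p = (1 + r)/2, q = (1 - r)/2 and f(k) = (2j/n - r)^2 for j = n/2 - k, the geometric
  series over m gives r P(k) = d(k) (p^(n+1-k) q^k - p^k q^(n+1-k)), where
  d(k) = C(n,k) - C(n,k-1). Summation by parts turns the sum of the first monomials over
  k <= n/2 into p E f(K) - q E f(K+1) for K ~ Bin(n, q), minus tails over k > n/2. As f is
  quadratic, the first two binomial moments give E f(K) = (1 - r^2)/n (the variance of 1 - 2K/n)
  and E f(K+1) = (1 - r^2)/n + 4/n^2, which combine to exactly r times the main term. Every
  remaining term is C(n,k) times a bounded f times p^a q^b with a <= b and a + b >= n, hence at
  most C(n,k) sqrt(pq)^n; summed over k this is O((2 sqrt(pq))^n) = O(sqrt(1 - r^2)^n).\<close>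

definition binomial_expectation :: "nat \<Rightarrow> real \<Rightarrow> (nat \<Rightarrow> real) \<Rightarrow> real" where
  "binomial_expectation n q h = (\<Sum>k\<le>n. real (n choose k) * q ^ k * (1 - q) ^ (n - k) * h k)"

lemma binomial_expectation_const [simp]: "binomial_expectation n q (\<lambda>_. c) = c"
proof -
  have "(\<Sum>k\<le>n. real (n choose k) * q ^ k * (1 - q) ^ (n - k)) = 1"
    using binomial_ring[of q "1 - q" n] by simp
  then show ?thesis
    unfolding binomial_expectation_def by (simp add: sum_distrib_right[symmetric])
qed

lemma binomial_expectation_add:
  "binomial_expectation n q (\<lambda>k. g k + h k) = binomial_expectation n q g + binomial_expectation n q h"
  unfolding binomial_expectation_def by (simp add: distrib_left sum.distrib)

lemma binomial_expectation_scale: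
  "binomial_expectation n q (\<lambda>k. c * h k) = c * binomial_expectation n q h"
  unfolding binomial_expectation_def by (simp add: sum_distrib_left mult_ac)

lemma binomial_expectation_Suc_of_nat_mult:
  "binomial_expectation (Suc n) q (\<lambda>k. real k * h k) =
     real (Suc n) * q * binomial_expectation n q (\<lambda>k. h (Suc k))"
proof -
  have "binomial_expectation (Suc n) q (\<lambda>k. real k * h k) =
      (\<Sum>k\<le>n. real (Suc k * (Suc n choose Suc k)) * q ^ Suc k * (1 - q) ^ (n - k) * h (Suc k))"
    unfolding binomial_expectation_def
    by (subst sum.atMost_Suc_shift) (simp add: algebra_simps del: binomial_Suc_Suc)
  also have "\<dots> = real (Suc n) * q * binomial_expectation n q (\<lambda>k. h (Suc k))"
    unfolding Suc_times_binomial binomial_expectation_def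
    by (simp add: sum_distrib_left algebra_simps del: binomial_Suc_Suc)
  finally show ?thesis .
qed

lemma binomial_expectation_of_nat: "binomial_expectation n q real = real n * q"
  using binomial_expectation_Suc_of_nat_mult[of "n - 1" q "\<lambda>_. 1"]
  by (cases n) (simp_all add: binomial_expectation_def)

lemma binomial_expectation_of_nat_squared:
  "binomial_expectation n q (\<lambda>k. real k ^ 2) = real n * q * ((real n - 1) * q + 1)"
proof (cases n)
  case (Suc m)
  have "binomial_expectation (Suc m) q (\<lambda>k. real k * real k) =
      real (Suc m) * q * binomial_expectation m q (\<lambda>k. real k + 1)"
    by (simp add: binomial_expectation_Suc_of_nat_mult add.commute)
  also have "\<dots> = real (Suc m) * q * (real m * q + 1)"
    by (simp add: binomial_expectation_add binomial_expectation_of_nat)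
  finally show ?thesis
    using Suc by (simp add: power2_eq_square)
qed (simp add: binomial_expectation_def)

lemma binomial_expectation_quadratic:
  "binomial_expectation n q (\<lambda>k. a + b * real k + c * real k ^ 2) =
     a + b * (real n * q) + c * (real n * q * ((real n - 1) * q + 1))"
  by (simp add: binomial_expectation_add binomial_expectation_scale
      binomial_expectation_of_nat binomial_expectation_of_nat_squared)

text \<open>The multiplicity of the spin j = n/2 - k irreducible representation in the n-fold tensor
  power of \<open>\<complex>\<^sup>2\<close>.\<close>

definition spin_multiplicity :: "nat \<Rightarrow> nat \<Rightarrow> real" where
  "spin_multiplicity n k = real (n choose k) - (if k = 0 then 0 else real (n choose (k - 1)))"

lemma spin_multiplicity_bounds:
  assumes "2 * k \<le> n"
  shows "0 \<le> spin_multiplicity n k \<and> spin_multiplicity n k \<le> real (n choose k)"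
proof (cases k)
  case (Suc j)
  have "n choose j \<le> n choose k"
    using assms Suc by (intro binomial_mono) auto
  then show ?thesis
    using Suc by (simp add: spin_multiplicity_def)
qed (simp add: spin_multiplicity_def)

lemma spin_P_closed_form:
  fixes r :: real
  assumes "2 * k \<le> n"
  defines "p \<equiv> (1 + r) / 2" and "q \<equiv> (1 - r) / 2"
  shows "r * spin_P n r k =
    spin_multiplicity n k * (p ^ (n + 1 - k) * q ^ k - p ^ k * q ^ (n + 1 - k))"
proof -
  define m where "m = n - 2 * k"
  have n_eq: "n = 2 * k + m"
    using assms(1) by (simp add: m_def)
  have "r * spin_P n r k =
      spin_multiplicity n k * (r * (\<Sum>i = 0..n - 2 * k. q ^ (n - k - i) * p ^ (k + i)))"
    by (simp add: spin_P_def spin_multiplicity_def p_def q_def mult.left_commute)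
  also have "(\<Sum>i = 0..n - 2 * k. q ^ (n - k - i) * p ^ (k + i)) =
      (p * q) ^ k * (\<Sum>i<Suc m. p ^ i * q ^ (m - i))"
    unfolding sum_distrib_left
  proof (intro sum.cong)
    fix i
    assume "i \<in> {..<Suc m}"
    then have "n - k - i = k + (m - i)"
      using n_eq by auto
    then show "q ^ (n - k - i) * p ^ (k + i) = (p * q) ^ k * (p ^ i * q ^ (m - i))"
      by (simp add: power_add power_mult_distrib)
  qed (auto simp: m_def)
  also have "r * ((p * q) ^ k * (\<Sum>i<Suc m. p ^ i * q ^ (m - i))) =
      (p * q) ^ k * (p ^ Suc m - q ^ Suc m)"
  proof -
    have "p - q = r"
      by (simp add: p_def q_def field_simps)
    then show ?thesis
      using diff_power_eq_sum[of p m q] by simp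
  qed
  also have "(p * q) ^ k * (p ^ Suc m - q ^ Suc m) =
      p ^ (n + 1 - k) * q ^ k - p ^ k * q ^ (n + 1 - k)"
    using n_eq by (simp add: power_add power_mult_distrib algebra_simps)
  finally show ?thesis .
qed

lemma sum_atMost_backward_diff_mult:
  fixes c a :: "nat \<Rightarrow> 'a::comm_ring"
  shows "(\<Sum>k\<le>N. (c k - (if k = 0 then 0 else c (k - 1))) * a k) =
    (\<Sum>k\<le>N. c k * a k) - (\<Sum>k<N. c k * a (Suc k))"
  by (induction N) (simp_all add: algebra_simps)

lemma mult_binomial_expectation_eq_sum:
  fixes q :: real
  defines "p \<equiv> 1 - q"
  shows "p * binomial_expectation n q f =
      (\<Sum>k\<le>n. real (n choose k) * (p ^ (n + 1 - k) * q ^ k) * f k)"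
    and "q * binomial_expectation n q (\<lambda>k. f (Suc k)) =
      (\<Sum>k\<le>n. real (n choose k) * (p ^ (n - k) * q ^ Suc k) * f (Suc k))"
  unfolding binomial_expectation_def sum_distrib_left p_def
  by (auto intro!: sum.cong simp: Suc_diff_le mult_ac)

lemma spin_sum_decomposition:
  fixes r :: real and n :: nat and f :: "nat \<Rightarrow> real"
  defines "p \<equiv> (1 + r) / 2" and "q \<equiv> (1 - r) / 2" and "N \<equiv> n div 2"
  shows "r * (\<Sum>k = 0..N. spin_P n r k * f k) =
    p * binomial_expectation n q f - q * binomial_expectation n q (\<lambda>k. f (Suc k))
    - (\<Sum>k = Suc N..n. real (n choose k) * (p ^ (n + 1 - k) * q ^ k) * f k)
    + (\<Sum>k = N..n. real (n choose k) * (p ^ (n - k) * q ^ Suc k) * f (Suc k))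
    - (\<Sum>k\<le>N. spin_multiplicity n k * (p ^ k * q ^ (n + 1 - k)) * f k)"
proof -
  define A where "A k = p ^ (n + 1 - k) * q ^ k" for k
  have N_le: "N \<le> n"
    by (simp add: N_def)
  have "p = 1 - q"
    by (simp add: p_def q_def field_simps)
  note full_sums = mult_binomial_expectation_eq_sum[of q n f, folded this]
  have "r * (spin_P n r k * f k) = spin_multiplicity n k * A k * f k
      - spin_multiplicity n k * (p ^ k * q ^ (n + 1 - k)) * f k" if "k \<le> N" for k
  proof -
    have "r * spin_P n r k = spin_multiplicity n k * (A k - p ^ k * q ^ (n + 1 - k))"
      using that spin_P_closed_form[of k n r] by (simp add: N_def A_def p_def q_def)
    then have "r * (spin_P n r k * f k) =
        spin_multiplicity n k * (A k - p ^ k * q ^ (n + 1 - k)) * f k"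
      by (simp only: mult.assoc[symmetric])
    then show ?thesis
      by (simp only: left_diff_distrib right_diff_distrib)
  qed
  then have "r * (\<Sum>k = 0..N. spin_P n r k * f k) =
      (\<Sum>k\<le>N. spin_multiplicity n k * A k * f k)
      - (\<Sum>k\<le>N. spin_multiplicity n k * (p ^ k * q ^ (n + 1 - k)) * f k)"
    by (simp add: atLeast0AtMost sum_distrib_left sum_subtractf[symmetric])
  also have "(\<Sum>k\<le>N. spin_multiplicity n k * A k * f k) =
      (\<Sum>k\<le>N. real (n choose k) * A k * f k) - (\<Sum>k<N. real (n choose k) * A (Suc k) * f (Suc k))"
    using sum_atMost_backward_diff_mult[of "\<lambda>k. real (n choose k)" "\<lambda>k. A k * f k" N]
    unfolding spin_multiplicity_def by (simp add: mult.assoc)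
  also have "(\<Sum>k\<le>N. real (n choose k) * A k * f k) =
      p * binomial_expectation n q f - (\<Sum>k = Suc N..n. real (n choose k) * A k * f k)"
    using full_sums(1) sum_up_index_split[of "\<lambda>k. real (n choose k) * A k * f k" N "n - N"] N_le
    by (simp add: A_def)
  also have "(\<Sum>k<N. real (n choose k) * A (Suc k) * f (Suc k)) =
      q * binomial_expectation n q (\<lambda>k. f (Suc k))
      - (\<Sum>k = N..n. real (n choose k) * A (Suc k) * f (Suc k))"
  proof -
    have "{..n} = {..<N} \<union> {N..n}" and "{..<N} \<inter> {N..n} = {}"
      using N_le by auto
    then show ?thesis
      using full_sums(2)
        sum.union_disjoint[of "{..<N}" "{N..n}" "\<lambda>k. real (n choose k) * A (Suc k) * f (Suc k)"]
      by (simp add: A_def)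
  qed
  finally show ?thesis
    by (simp add: A_def)
qed

lemma power_mult_power_le_sqrt_power:
  fixes p q :: real
  assumes "0 \<le> q" and "q \<le> p" and "a \<le> b"
  shows "p ^ a * q ^ b \<le> sqrt (p * q) ^ (a + b)"
proof -
  have q_le: "q \<le> sqrt (p * q)"
    using assms real_sqrt_le_mono[of "q * q" "p * q"] by (simp add: mult_right_mono)
  have "p ^ a * q ^ b = (p * q) ^ a * q ^ (b - a)"
    using assms(3) by (simp add: power_mult_distrib power_add[symmetric])
  also have "\<dots> \<le> (p * q) ^ a * sqrt (p * q) ^ (b - a)"
    using assms q_le by (intro mult_left_mono power_mono) auto
  also have "\<dots> = sqrt (p * q) ^ (2 * a) * sqrt (p * q) ^ (b - a)"
    using assms by (simp add: power_mult)
  also have "\<dots> = sqrt (p * q) ^ (a + b)"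
    using assms(3) by (simp add: power_add[symmetric])
  finally show ?thesis .
qed

lemma abs_sum_binomial_monomials_le:
  fixes p q M :: real and w f :: "nat \<Rightarrow> real" and a b :: "nat \<Rightarrow> nat"
  assumes "0 \<le> q" and "q \<le> p" and "p * q \<le> 1" and "0 \<le> M" and "S \<subseteq> {..n}"
    and "\<And>k. k \<in> S \<Longrightarrow> 0 \<le> w k \<and> w k \<le> real (n choose k)"
    and "\<And>k. k \<in> S \<Longrightarrow> a k \<le> b k \<and> n \<le> a k + b k"
    and "\<And>k. k \<in> S \<Longrightarrow> \<bar>f k\<bar> \<le> M"
  shows "\<bar>\<Sum>k\<in>S. w k * (p ^ a k * q ^ b k) * f k\<bar> \<le> M * (2 * sqrt (p * q)) ^ n"
proof -
  let ?g = "sqrt (p * q)"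
  have "0 \<le> ?g"
    using assms(1,2) by simp
  have term_le: "\<bar>w k * (p ^ a k * q ^ b k) * f k\<bar> \<le> real (n choose k) * (M * ?g ^ n)"
    if "k \<in> S" for k
  proof -
    have "p ^ a k * q ^ b k \<le> ?g ^ (a k + b k)"
      using assms(1,2) assms(7)[OF that] by (intro power_mult_power_le_sqrt_power) auto
    also have "\<dots> \<le> ?g ^ n"
      using assms(1-3) assms(7)[OF that] by (intro power_decreasing) auto
    finally have monomial_le: "\<bar>p ^ a k * q ^ b k\<bar> \<le> ?g ^ n"
      using assms(1,2) by simp
    have w: "0 \<le> w k" "w k \<le> real (n choose k)"
      using assms(6)[OF that] by auto
    have "\<bar>w k * (p ^ a k * q ^ b k) * f k\<bar> = w k * (\<bar>p ^ a k * q ^ b k\<bar> * \<bar>f k\<bar>)"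
      using w by (simp add: abs_mult)
    also have "\<dots> \<le> real (n choose k) * (?g ^ n * M)"
      using w monomial_le assms(8)[OF that] by (intro mult_mono) auto
    finally show ?thesis
      by (simp add: mult_ac)
  qed
  have "\<bar>\<Sum>k\<in>S. w k * (p ^ a k * q ^ b k) * f k\<bar> \<le> (\<Sum>k\<in>S. real (n choose k) * (M * ?g ^ n))"
    using term_le by (intro order.trans[OF sum_abs] sum_mono)
  also have "\<dots> \<le> (\<Sum>k\<le>n. real (n choose k) * (M * ?g ^ n))"
    using assms(4,5) \<open>0 \<le> ?g\<close> by (intro sum_mono2) auto
  also have "\<dots> = M * (2 * ?g) ^ n"
  proof -
    have "(\<Sum>k\<le>n. real (n choose k)) = 2 ^ n"
      by (simp flip: of_nat_sum add: choose_row_sum)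
    then show ?thesis
      by (simp add: sum_distrib_right[symmetric] power_mult_distrib)
  qed
  finally show ?thesis .
qed

lemma spin_ratio_deviation_le:
  assumes "0 < n" and "k \<le> n + 1" and "0 \<le> r" and "r \<le> 1"
  shows "(spin_ratio n k - r) ^ 2 \<le> 16"
proof -
  have "-3 \<le> spin_ratio n k" and "spin_ratio n k \<le> 1"
    using assms(1,2) by (simp_all add: spin_ratio_def field_simps)
  then have "\<bar>spin_ratio n k - r\<bar> \<le> 4"
    using assms(3,4) by linarith
  then have "\<bar>spin_ratio n k - r\<bar> ^ 2 \<le> 4 ^ 2"
    by (intro power_mono) auto
  then show ?thesis
    by simp
qed

lemma binomial_expectation_spin_deviation:
  fixes r :: real
  assumes "0 < n"
  defines "q \<equiv> (1 - r) / 2"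
  shows "binomial_expectation n q (\<lambda>k. (spin_ratio n k - r) ^ 2) = (1 - r ^ 2) / n"
    and "binomial_expectation n q (\<lambda>k. (spin_ratio n (Suc k) - r) ^ 2) = (1 - r ^ 2) / n + 4 / real n ^ 2"
proof -
  have "(\<lambda>k. (spin_ratio n (k + j) - r) ^ 2) = (\<lambda>k.
      (1 - r - 2 * j / n) ^ 2 + (- 4 * (1 - r - 2 * j / n) / n) * real k + (4 / real n ^ 2) * real k ^ 2)"
    for j
    using assms(1) by (intro ext) (simp add: spin_ratio_def field_simps power2_eq_square)
  then have "binomial_expectation n q (\<lambda>k. (spin_ratio n (k + j) - r) ^ 2) =
      (1 - r - 2 * j / n) ^ 2 + (- 4 * (1 - r - 2 * j / n) / n) * (n * q)
      + (4 / real n ^ 2) * (n * q * ((real n - 1) * q + 1))" for j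
    by (simp only: binomial_expectation_quadratic)
  note moments = this
  have "binomial_expectation n q (\<lambda>k. (spin_ratio n k - r) ^ 2) =
      (1 - r) ^ 2 + (- 4 * (1 - r) / n) * (n * q) + (4 / real n ^ 2) * (n * q * ((real n - 1) * q + 1))"
    using moments[of 0] by simp
  also have "\<dots> = (1 - r ^ 2) / n"
    using assms(1) by (simp add: q_def field_simps power2_eq_square)
  finally show "binomial_expectation n q (\<lambda>k. (spin_ratio n k - r) ^ 2) = (1 - r ^ 2) / n" .
  have "binomial_expectation n q (\<lambda>k. (spin_ratio n (Suc k) - r) ^ 2) =
      (1 - r - 2 / n) ^ 2 + (- 4 * (1 - r - 2 / n) / n) * (n * q)
      + (4 / real n ^ 2) * (n * q * ((real n - 1) * q + 1))"
    using moments[of 1] by simp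
  also have "\<dots> = (1 - r ^ 2) / n + 4 / real n ^ 2"
    using assms(1) by (simp add: q_def field_simps power2_eq_square)
  finally show "binomial_expectation n q (\<lambda>k. (spin_ratio n (Suc k) - r) ^ 2) =
      (1 - r ^ 2) / n + 4 / real n ^ 2" .
qed

lemma spin_deviation_error_eq:
  fixes r :: real
  assumes "r \<noteq> 0" and "0 < n"
  defines "p \<equiv> (1 + r) / 2" and "q \<equiv> (1 - r) / 2" and "N \<equiv> n div 2"
  shows "r * ((\<Sum>k = 0..N. spin_P n r k * (spin_ratio n k - r) ^ 2)
      - ((1 - r ^ 2) / real n - (2 * (1 - r) / r) / (real n) ^ 2)) =
    (\<Sum>k = N..n. real (n choose k) * (p ^ (n - k) * q ^ Suc k) * (spin_ratio n (Suc k) - r) ^ 2)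
    - (\<Sum>k = Suc N..n. real (n choose k) * (p ^ (n + 1 - k) * q ^ k) * (spin_ratio n k - r) ^ 2)
    - (\<Sum>k\<le>N. spin_multiplicity n k * (p ^ k * q ^ (n + 1 - k)) * (spin_ratio n k - r) ^ 2)"
proof -
  note moments = binomial_expectation_spin_deviation[OF assms(2), of r, folded q_def]
  have "r * ((1 - r ^ 2) / real n - (2 * (1 - r) / r) / (real n) ^ 2) =
      p * ((1 - r ^ 2) / n) - q * ((1 - r ^ 2) / n + 4 / real n ^ 2)"
    using assms(1,2) by (simp add: p_def q_def field_simps power2_eq_square)
  with spin_sum_decomposition[of r n "\<lambda>k. (spin_ratio n k - r) ^ 2",
      folded p_def q_def N_def, unfolded moments]
  show ?thesis
    unfolding right_diff_distrib by linarith
qed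

lemma spin_deviation_error_le:
  fixes r :: real
  assumes "0 < r" and "r < 1" and "0 < n"
  shows "\<bar>(\<Sum>k = 0..n div 2. spin_P n r k * (spin_ratio n k - r) ^ 2)
      - ((1 - r ^ 2) / real n - (2 * (1 - r) / r) / (real n) ^ 2)\<bar>
    \<le> 48 / r * sqrt (1 - r ^ 2) ^ n"
proof -
  define p where "p = (1 + r) / 2"
  define q where "q = (1 - r) / 2"
  define N where "N = n div 2"
  have "r \<noteq> 0"
    using assms(1) by simp
  have pq: "0 \<le> q" "q \<le> p" "p * q \<le> 1"
    using assms(1,2) by (simp_all add: p_def q_def field_simps)
  have "1 - r ^ 2 = 2 ^ 2 * (p * q)"
    by (simp add: p_def q_def field_simps power2_eq_square)
  then have gamma: "sqrt (1 - r ^ 2) = 2 * sqrt (p * q)"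
    by (simp add: real_sqrt_mult)
  have f_le: "\<bar>(spin_ratio n k - r) ^ 2\<bar> \<le> 16" if "k \<le> n + 1" for k
    using spin_ratio_deviation_le[OF assms(3) that] assms(1,2) by simp
  have "\<bar>\<Sum>k = N..n. real (n choose k) * (p ^ (n - k) * q ^ Suc k) * (spin_ratio n (Suc k) - r) ^ 2\<bar>
      \<le> 16 * sqrt (1 - r ^ 2) ^ n"
    unfolding gamma using pq f_le
    by (intro abs_sum_binomial_monomials_le[where a = "\<lambda>k. n - k" and b = Suc]) (auto simp: N_def)
  moreover have "\<bar>\<Sum>k = Suc N..n. real (n choose k) * (p ^ (n + 1 - k) * q ^ k) * (spin_ratio n k - r) ^ 2\<bar>
      \<le> 16 * sqrt (1 - r ^ 2) ^ n"
    unfolding gamma using pq f_le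
    by (intro abs_sum_binomial_monomials_le[where a = "\<lambda>k. n + 1 - k" and b = "\<lambda>k. k"])
      (auto simp: N_def)
  moreover have "\<bar>\<Sum>k\<le>N. spin_multiplicity n k * (p ^ k * q ^ (n + 1 - k)) * (spin_ratio n k - r) ^ 2\<bar>
      \<le> 16 * sqrt (1 - r ^ 2) ^ n"
    unfolding gamma using pq f_le spin_multiplicity_bounds
    by (intro abs_sum_binomial_monomials_le[where a = "\<lambda>k. k" and b = "\<lambda>k. n + 1 - k"])
      (auto simp: N_def)
  ultimately have "\<bar>r * ((\<Sum>k = 0..N. spin_P n r k * (spin_ratio n k - r) ^ 2)
      - ((1 - r ^ 2) / real n - (2 * (1 - r) / r) / (real n) ^ 2))\<bar> \<le> 48 * sqrt (1 - r ^ 2) ^ n"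
    unfolding spin_deviation_error_eq[OF \<open>r \<noteq> 0\<close> assms(3), folded p_def q_def N_def] abs_le_iff
    using assms(1) by linarith
  then show ?thesis
    using assms(1) by (simp add: N_def abs_mult pos_le_divide_eq mult.commute)
qed

theorem mainTheorem11:
  fixes r :: real
  assumes "0 < r" and "r < 1"
  shows "\<exists>\<gamma>::real. 0 < \<gamma> \<and> \<gamma> < 1 \<and>
    (\<lambda>n::nat. (\<Sum>k = 0..n div 2. spin_P n r k * (spin_ratio n k - r) ^ 2)
        - ((1 - r ^ 2) / real n - (2 * (1 - r) / r) / (real n) ^ 2))
    \<in> O(\<lambda>n. \<gamma> ^ n)"
proof -
  define \<gamma> where "\<gamma> = sqrt (1 - r ^ 2)"
  have "0 < \<gamma>" and "\<gamma> < 1"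
    using assms by (simp_all add: \<gamma>_def power_less_one_iff abs_less_iff)
  have "eventually (\<lambda>n. \<bar>(\<Sum>k = 0..n div 2. spin_P n r k * (spin_ratio n k - r) ^ 2)
      - ((1 - r ^ 2) / real n - (2 * (1 - r) / r) / (real n) ^ 2)\<bar> \<le> 48 / r * \<gamma> ^ n) sequentially"
    using eventually_gt_at_top[of 0]
    by eventually_elim (use spin_deviation_error_le assms in \<open>auto simp: \<gamma>_def\<close>)
  then have "(\<lambda>n. (\<Sum>k = 0..n div 2. spin_P n r k * (spin_ratio n k - r) ^ 2)
      - ((1 - r ^ 2) / real n - (2 * (1 - r) / r) / (real n) ^ 2)) \<in> O(\<lambda>n. \<gamma> ^ n)"
    using \<open>0 < \<gamma>\<close> by (intro bigoI[where c = "48 / r"]) simp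
  with \<open>0 < \<gamma>\<close> \<open>\<gamma> < 1\<close> show ?thesis
    by blast
qed

end
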